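(* Let $P$ be a positive opetope and $I$ the one-dimensional positive opetope. The $\iota$-maps $P\to I$ that are surjective on faces are in bijective correspondence with the $1$-faces of $P$ lying in $P_1-\gamma(P_2)$.
   Context: A positive hypergraph $S$ consists of finite sets $S_k$ ($k\in\mathbb{N}$), only finitely many nonempty, functions $\gamma:S_{k+1}\to S_k$, and for each $k$ an assignment $\delta$ sending each $a\in S_{k+1}$ to a nonempty subset $\delta(a)\subseteq S_k$, with $\delta(a)$ a singleton for $a\in S_1$. A face is identified with its singleton; $\gamma(X)=\{\gamma(a):a\in X\}$, $\delta(X)=\bigcup_{a\in X}\delta(a)$. For $k>0$ the lower order $<^-$ on $S_k$ is the transitive closure of: $a\lhd b$ iff $\gamma(a)\in\delta(b)$. The upper order $<^+$ on $S_k$ is the transitive closure of: $a\lhd b$ iff there is $\alpha\in S_{k+1}$ with $a\in\delta(\alpha)$, $\gamma(\alpha)=b$; $a\perp^{\pm}b$ iff $a<^{\pm}b$ or $b<^{\pm}a$. A positive opetopic cardinal: $S_0\ne\emptyset$; globularity ($\gamma\gamma(a)=\gamma\delta(a)-\delta\delta(a)$, $\delta\gamma(a)=\delta\delta(a)-\gamma\delta(a)$ for $\dim a\ge2$); each $<^+$ a strict order, linear on $S_0$; for $k>0$, $\perp^-\cap\perp^+=\emptyset$ on $S_k$; for $x\in S_{k-1}$, $\{a:\gamma(a)=x\}$ and $\{a:x\in\delta(a)\}$ linearly ordered by $<^+$. A positive opetope: additionally $|P_m-\delta(P_{m+1})|\le1$ for all $m$. $\gamma^{(k)}(p)=p$ if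 $\dim p\le k$, else $\gamma^{(k)}(p)=\gamma(\gamma^{(k+1)}(p))$. An $\iota$-map $h:Q\to P$ of positive opetopes is a function on faces with: $\dim h(q)\le\dim q$; $h(\gamma^{(k)}(q))=\gamma^{(k)}(h(q))$ for $k\ge0$, $q\in Q_{k+1}$; and, with $\ker(h)=\{q:\dim q>\dim h(q)\}$, for $q\in Q_{k+1}$: if $\dim h(q)=k+1$, $h$ restricts to a bijection $\delta(q)-\ker(h)\to\delta(h(q))$; if $\dim h(q)=k$, to a bijection $\delta(q)-\ker(h)\to\{h(q)\}$; if $\dim h(q)<k$, $\delta(q)\subseteq\ker(h)$. $I$ denotes the positive opetope with $I_0=\{-,+\}$, $I_1=\{a\}$, $\delta(a)=\{-\}$, $\gamma(a)=+$, and no other faces. *)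

theory Defs
  imports "HOL-Library.FuncSet"
begin

text \<open>A positive hypergraph on a face type 'a: a finite set of faces, each with a
dimension, a target (gam) and a set of sources (del).\<close>

record 'a phg =
  faces :: "'a set"
  dim :: "'a \<Rightarrow> nat"
  gam :: "'a \<Rightarrow> 'a"
  del :: "'a \<Rightarrow> 'a set"

definition Sk :: "'a phg \<Rightarrow> nat \<Rightarrow> 'a set" where
  "Sk S k = {a \<in> faces S. dim S a = k}"

definition Del :: "'a phg \<Rightarrow> 'a set \<Rightarrow> 'a set" where
  "Del S X = (\<Union>a\<in>X. del S a)"

definition pos_hypergraph :: "'a phg \<Rightarrow> bool" where
  "pos_hypergraph S \<longleftrightarrow> finite (faces S) \<and>
     (\<forall>k. \<forall>a \<in> Sk S (Suc k).
        gam S a \<in> Sk S k \<and> del S a \<subseteq> Sk S k \<and> del S a \<noteq> {}) \<and>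
     (\<forall>a \<in> Sk S 1. \<exists>x. del S a = {x})"

definition lower_rel :: "'a phg \<Rightarrow> nat \<Rightarrow> ('a \<times> 'a) set" where
  "lower_rel S k = {(a, b). a \<in> Sk S k \<and> b \<in> Sk S k \<and> gam S a \<in> del S b}"

definition lower_lt :: "'a phg \<Rightarrow> nat \<Rightarrow> ('a \<times> 'a) set" where
  "lower_lt S k = (lower_rel S k)\<^sup>+"

definition upper_rel :: "'a phg \<Rightarrow> nat \<Rightarrow> ('a \<times> 'a) set" where
  "upper_rel S k = {(a, b). a \<in> Sk S k \<and> b \<in> Sk S k \<and>
      (\<exists>\<alpha> \<in> Sk S (Suc k). a \<in> del S \<alpha> \<and> gam S \<alpha> = b)}"

definition upper_lt :: "'a phg \<Rightarrow> nat \<Rightarrow> ('a \<times> 'a) set" where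
  "upper_lt S k = (upper_rel S k)\<^sup>+"

definition comparable :: "('a \<times> 'a) set \<Rightarrow> 'a \<Rightarrow> 'a \<Rightarrow> bool" where
  "comparable R a b \<longleftrightarrow> (a, b) \<in> R \<or> (b, a) \<in> R"

definition lin_ordered_by :: "('a \<times> 'a) set \<Rightarrow> 'a set \<Rightarrow> bool" where
  "lin_ordered_by R X \<longleftrightarrow> (\<forall>a \<in> X. \<forall>b \<in> X. a \<noteq> b \<longrightarrow> comparable R a b)"

definition pos_opetopic_cardinal :: "'a phg \<Rightarrow> bool" where
  "pos_opetopic_cardinal S \<longleftrightarrow> pos_hypergraph S \<and>
     Sk S 0 \<noteq> {} \<and>
     (\<forall>a \<in> faces S. dim S a \<ge> 2 \<longrightarrow>
        {gam S (gam S a)} = gam S ` del S a - Del S (del S a) \<and>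
        del S (gam S a) = Del S (del S a) - gam S ` del S a) \<and>
     (\<forall>k. irrefl_on (Sk S k) (upper_lt S k)) \<and>
     lin_ordered_by (upper_lt S 0) (Sk S 0) \<and>
     (\<forall>k > 0. \<forall>a \<in> Sk S k. \<forall>b \<in> Sk S k.
        \<not> (comparable (lower_lt S k) a b \<and> comparable (upper_lt S k) a b)) \<and>
     (\<forall>k. \<forall>x \<in> Sk S k.
        lin_ordered_by (upper_lt S (Suc k)) {a \<in> Sk S (Suc k). gam S a = x} \<and>
        lin_ordered_by (upper_lt S (Suc k)) {a \<in> Sk S (Suc k). x \<in> del S a})"

definition pos_opetope :: "'a phg \<Rightarrow> bool" where
  "pos_opetope P \<longleftrightarrow> pos_opetopic_cardinal P \<and>
     (\<forall>m. card (Sk P m - Del P (Sk P (Suc m))) \<le> 1)"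

text \<open>gamma^(k)(p) = p if dim p <= k, else gamma(gamma^(k+1)(p)); i.e. gamma iterated
  (dim p - k) times.\<close>
definition gamk :: "'a phg \<Rightarrow> nat \<Rightarrow> 'a \<Rightarrow> 'a" where
  "gamk S k p = (gam S ^^ (dim S p - k)) p"

definition ker :: "'b phg \<Rightarrow> 'a phg \<Rightarrow> ('b \<Rightarrow> 'a) \<Rightarrow> 'b set" where
  "ker Q P h = {q \<in> faces Q. dim P (h q) < dim Q q}"

definition iota_map :: "'b phg \<Rightarrow> 'a phg \<Rightarrow> ('b \<Rightarrow> 'a) \<Rightarrow> bool" where
  "iota_map Q P h \<longleftrightarrow>
     (\<forall>q \<in> faces Q. h q \<in> faces P) \<and>
     (\<forall>q \<in> faces Q. dim P (h q) \<le> dim Q q) \<and>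
     (\<forall>k. \<forall>q \<in> Sk Q (Suc k). h (gamk Q k q) = gamk P k (h q)) \<and>
     (\<forall>k. \<forall>q \<in> Sk Q (Suc k).
        (dim P (h q) = Suc k \<longrightarrow> bij_betw h (del Q q - ker Q P h) (del P (h q))) \<and>
        (dim P (h q) = k \<longrightarrow> bij_betw h (del Q q - ker Q P h) {h q}) \<and>
        (dim P (h q) < k \<longrightarrow> del Q q \<subseteq> ker Q P h))"

datatype I_face = IMinus | IPlus | IA

definition I_op :: "I_face phg" where
  "I_op = \<lparr> faces = {IMinus, IPlus, IA},
            dim = (\<lambda>x. if x = IA then 1 else 0),
            gam = (\<lambda>x. if x = IA then IPlus else x),
            del = (\<lambda>x. if x = IA then {IMinus} else {}) \<rparr>"

end

theory Submission
  imports Defs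
begin

text \<open>An \<open>\<iota>\<close>-map \<open>h : P \<rightarrow> I\<close> is determined by its values on vertices, since a face of dimension
  at least two must go where its target goes; the vertices sent to \<open>-\<close> form a down-closed set
  for the linear order \<open><\<^sup>+\<close> on \<open>P\<^sub>0\<close>. If \<open>h\<close> is onto, the last vertex sent to \<open>-\<close> is the
  source of an edge of \<open>P\<^sub>1 - \<gamma>(P\<^sub>2)\<close> sent to the arrow. Such an edge is unique because no vertex
  lies strictly between the endpoints of an edge of \<open>P\<^sub>1 - \<gamma>(P\<^sub>2)\<close>, so the cut is the down-set of
  its source. Conversely, cutting \<open>P\<^sub>0\<close> below the source of such an edge gives an \<open>\<iota>\<close>-map: by
  globularity, and since source and target are injective on \<open>\<delta>(\<alpha>)\<close>, exactly one source of a
  2-face \<open>\<alpha>\<close> crosses the cut iff \<open>\<gamma>(\<alpha>)\<close> does.\<close>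

lemma gamk_Suc: "q \<in> Sk S (Suc k) \<Longrightarrow> gamk S k q = gam S q"
  unfolding gamk_def Sk_def by simp

lemma I_faces [simp]: "faces I_op = {IMinus, IPlus, IA}"
  and I_dim [simp]: "dim I_op x = (if x = IA then 1 else 0)"
  and I_gam [simp]: "gam I_op x = (if x = IA then IPlus else x)"
  and I_del [simp]: "del I_op x = (if x = IA then {IMinus} else {})"
  by (simp_all add: I_op_def)

lemma gamk_I: "gamk I_op k x = (if x = IA \<and> k = 0 then IPlus else x)"
  unfolding gamk_def by (cases x) auto

lemma card_Int_split_singleton:
  assumes "finite S" "S - G = {s}"
  shows "card (S \<inter> D) = card (S \<inter> G \<inter> D) + card ({s} \<inter> D)"
proof -
  have "S \<inter> D = (S \<inter> G \<inter> D) \<union> ({s} \<inter> D)" using assms(2) by blast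
  moreover have "(S \<inter> G \<inter> D) \<inter> ({s} \<inter> D) = {}" using assms(2) by blast
  ultimately show ?thesis using assms(1) by (simp add: card_Un_disjoint)
qed

locale opetopic_cardinal =
  fixes P :: "'a phg"
  assumes cardinal: "pos_opetopic_cardinal P"
begin

lemma pos_hypergraph: "pos_hypergraph P"
  using cardinal unfolding pos_opetopic_cardinal_def by blast

lemma finite_Sk: "finite (Sk P k)"
  using pos_hypergraph unfolding pos_hypergraph_def Sk_def by simp

lemma Sk_faces: "x \<in> Sk P k \<Longrightarrow> x \<in> faces P"
  and Sk_dim: "x \<in> Sk P k \<Longrightarrow> dim P x = k"
  and SkI: "x \<in> faces P \<Longrightarrow> dim P x = k \<Longrightarrow> x \<in> Sk P k"
  unfolding Sk_def by auto

lemma gam_Sk: "a \<in> Sk P (Suc k) \<Longrightarrow> gam P a \<in> Sk P k"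
  and del_Sk: "a \<in> Sk P (Suc k) \<Longrightarrow> del P a \<subseteq> Sk P k"
  using pos_hypergraph unfolding pos_hypergraph_def by blast+

lemma gam_Sk1: "e \<in> Sk P 1 \<Longrightarrow> gam P e \<in> Sk P 0"
  using gam_Sk[of e 0] by simp

lemma gam_Sk2: "\<alpha> \<in> Sk P 2 \<Longrightarrow> gam P \<alpha> \<in> Sk P 1"
  and del_Sk2: "\<alpha> \<in> Sk P 2 \<Longrightarrow> del P \<alpha> \<subseteq> Sk P 1"
  using gam_Sk[of \<alpha> 1] del_Sk[of \<alpha> 1] by (simp_all add: numeral_2_eq_2)

lemma face_induct [consumes 1, case_names vertex edge higher]:
  assumes "q \<in> faces P"
    and "\<And>x. x \<in> Sk P 0 \<Longrightarrow> Q x"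
    and "\<And>e. e \<in> Sk P 1 \<Longrightarrow> Q e"
    and "\<And>q k. q \<in> Sk P (Suc (Suc k)) \<Longrightarrow> Q (gam P q) \<Longrightarrow> Q q"
  shows "Q q"
  using assms(1)
proof (induction "dim P q" arbitrary: q rule: less_induct)
  case less
  consider "dim P q = 0" | "dim P q = 1" | k where "dim P q = Suc (Suc k)"
    by (metis One_nat_def not0_implies_Suc)
  then show ?case
  proof cases
    case 3
    then have q: "q \<in> Sk P (Suc (Suc k))" using less.prems by (rule SkI[rotated])
    have "Q (gam P q)"
      using less.hyps gam_Sk[OF q] Sk_dim Sk_faces q by (metis lessI)
    then show ?thesis using assms(4)[OF q] by blast
  qed (use less.prems SkI assms(2,3) in blast)+
qed

definition edge_src :: "'a \<Rightarrow> 'a" where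
  "edge_src e = the_elem (del P e)"

lemma del_edge: "e \<in> Sk P 1 \<Longrightarrow> del P e = {edge_src e}"
  using pos_hypergraph unfolding pos_hypergraph_def edge_src_def by force

lemma edge_src_Sk0: "e \<in> Sk P 1 \<Longrightarrow> edge_src e \<in> Sk P 0"
  using del_edge[of e] del_Sk[of e 0] by auto

lemma globular_edges:
  assumes "\<alpha> \<in> Sk P 2"
  shows "{gam P (gam P \<alpha>)} = gam P ` del P \<alpha> - edge_src ` del P \<alpha>"
    and "{edge_src (gam P \<alpha>)} = edge_src ` del P \<alpha> - gam P ` del P \<alpha>"
proof -
  have "\<forall>a \<in> faces P. dim P a \<ge> 2 \<longrightarrow>
        {gam P (gam P a)} = gam P ` del P a - Del P (del P a) \<and>
        del P (gam P a) = Del P (del P a) - gam P ` del P a"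
    using cardinal unfolding pos_opetopic_cardinal_def by (elim conjE) assumption
  moreover have "\<alpha> \<in> faces P" "2 \<le> dim P \<alpha>" using assms by (simp_all add: Sk_def)
  moreover have "Del P (del P \<alpha>) = edge_src ` del P \<alpha>"
    using del_Sk2[OF assms] del_edge unfolding Del_def by auto
  ultimately show "{gam P (gam P \<alpha>)} = gam P ` del P \<alpha> - edge_src ` del P \<alpha>"
    and "{edge_src (gam P \<alpha>)} = edge_src ` del P \<alpha> - gam P ` del P \<alpha>"
    using del_edge[OF gam_Sk2[OF assms]] by simp_all
qed

subsection \<open>The upper order\<close>

lemma upper_lt_Sk: "upper_lt P k \<subseteq> Sk P k \<times> Sk P k"
  unfolding upper_lt_def upper_rel_def by (rule trancl_subset_Sigma) blast

lemma upper_lt_trans: "(a, b) \<in> upper_lt P k \<Longrightarrow> (b, c) \<in> upper_lt P k \<Longrightarrow> (a, c) \<in> upper_lt P k"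
  unfolding upper_lt_def by (rule trancl_trans)

lemma upper_lt_irrefl: "(a, a) \<notin> upper_lt P k"
proof -
  have "\<forall>k. irrefl_on (Sk P k) (upper_lt P k)"
    using cardinal unfolding pos_opetopic_cardinal_def by (elim conjE) assumption
  then show ?thesis using upper_lt_Sk unfolding irrefl_on_def by blast
qed

lemma upper_lt_asym: "(a, b) \<in> upper_lt P k \<Longrightarrow> (b, a) \<notin> upper_lt P k"
  using upper_lt_trans upper_lt_irrefl by blast

lemma upper_lt_Sk0_linear:
  assumes "a \<in> Sk P 0" "b \<in> Sk P 0" "a \<noteq> b"
  shows "(a, b) \<in> upper_lt P 0 \<or> (b, a) \<in> upper_lt P 0"
proof -
  have "lin_ordered_by (upper_lt P 0) (Sk P 0)"
    using cardinal unfolding pos_opetopic_cardinal_def by (elim conjE) assumption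
  then show ?thesis using assms unfolding lin_ordered_by_def comparable_def by blast
qed

lemma lower_upper_incomparable:
  assumes "0 < k" "a \<in> Sk P k" "b \<in> Sk P k" "comparable (lower_lt P k) a b"
  shows "\<not> comparable (upper_lt P k) a b"
proof -
  have "\<forall>k > 0. \<forall>a \<in> Sk P k. \<forall>b \<in> Sk P k.
      \<not> (comparable (lower_lt P k) a b \<and> comparable (upper_lt P k) a b)"
    using cardinal unfolding pos_opetopic_cardinal_def by (elim conjE) assumption
  then show ?thesis using assms by simp
qed

lemma lin_ordered_upper_lt_by_gam_del:
  assumes "x \<in> Sk P k"
  shows "lin_ordered_by (upper_lt P (Suc k)) {a \<in> Sk P (Suc k). gam P a = x}"
    and "lin_ordered_by (upper_lt P (Suc k)) {a \<in> Sk P (Suc k). x \<in> del P a}"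
proof -
  have "\<forall>k. \<forall>x \<in> Sk P k.
        lin_ordered_by (upper_lt P (Suc k)) {a \<in> Sk P (Suc k). gam P a = x} \<and>
        lin_ordered_by (upper_lt P (Suc k)) {a \<in> Sk P (Suc k). x \<in> del P a}"
    using cardinal unfolding pos_opetopic_cardinal_def by (elim conjE) assumption
  then show "lin_ordered_by (upper_lt P (Suc k)) {a \<in> Sk P (Suc k). gam P a = x}"
    and "lin_ordered_by (upper_lt P (Suc k)) {a \<in> Sk P (Suc k). x \<in> del P a}"
    using assms by simp_all
qed

lemma upper_lt_comparable_common_gam:
  assumes "a \<in> Sk P (Suc k)" "b \<in> Sk P (Suc k)" "gam P a = gam P b" "a \<noteq> b"
  shows "comparable (upper_lt P (Suc k)) a b"
  using lin_ordered_upper_lt_by_gam_del(1)[OF gam_Sk[OF assms(1)]] assms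
  by (simp add: lin_ordered_by_def)

lemma upper_lt_comparable_common_del:
  assumes "x \<in> del P a" "x \<in> del P b" "a \<in> Sk P (Suc k)" "b \<in> Sk P (Suc k)" "a \<noteq> b"
  shows "comparable (upper_lt P (Suc k)) a b"
  using lin_ordered_upper_lt_by_gam_del(2)[of x k] del_Sk[OF assms(3)] assms
  by (simp add: lin_ordered_by_def subset_iff)

lemma wf_upper_lt: "wf (upper_lt P k)" and wf_converse_upper_lt: "wf ((upper_lt P k)\<inverse>)"
proof -
  have "finite (upper_lt P k)"
    using upper_lt_Sk finite_Sk by (meson finite_SigmaI finite_subset)
  moreover have "acyclic (upper_lt P k)"
    using upper_lt_irrefl unfolding acyclic_def upper_lt_def by simp
  ultimately show "wf (upper_lt P k)" "wf ((upper_lt P k)\<inverse>)"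
    by (blast intro: finite_acyclic_wf finite_acyclic_wf_converse)+
qed

lemma upper_lt_minimal:
  assumes "x \<in> X" shows "\<exists>m \<in> X. \<forall>y \<in> X. (y, m) \<notin> upper_lt P k"
  using wfE_min[OF wf_upper_lt assms] by metis

lemma upper_lt_maximal:
  assumes "x \<in> X" shows "\<exists>m \<in> X. \<forall>y \<in> X. (m, y) \<notin> upper_lt P k"
  using wfE_min[OF wf_converse_upper_lt assms] by (metis converse_iff)

lemma upper_rel_Sk0_iff:
  "(x, y) \<in> upper_rel P 0 \<longleftrightarrow> (\<exists>e \<in> Sk P 1. edge_src e = x \<and> gam P e = y)"
proof
  assume "(x, y) \<in> upper_rel P 0"
  then obtain e where "e \<in> Sk P 1" "x \<in> del P e" "gam P e = y"
    unfolding upper_rel_def by auto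
  then show "\<exists>e \<in> Sk P 1. edge_src e = x \<and> gam P e = y" using del_edge by auto
next
  assume "\<exists>e \<in> Sk P 1. edge_src e = x \<and> gam P e = y"
  then obtain e where e: "e \<in> Sk P 1" "edge_src e = x" "gam P e = y" by blast
  then have "e \<in> Sk P (Suc 0)" "x \<in> del P e" using del_edge by simp_all
  then show "(x, y) \<in> upper_rel P 0"
    unfolding upper_rel_def using e edge_src_Sk0 gam_Sk1 by blast
qed

lemma upper_lt_edge: "e \<in> Sk P 1 \<Longrightarrow> (edge_src e, gam P e) \<in> upper_lt P 0"
  unfolding upper_lt_def using upper_rel_Sk0_iff by blast

subsection \<open>Edges that are not targets\<close>

definition nontarget_edges :: "'a set" where
  "nontarget_edges = Sk P 1 - gam P ` Sk P 2"

lemma nontarget_edges_Sk1: "a \<in> nontarget_edges \<Longrightarrow> a \<in> Sk P 1"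
  unfolding nontarget_edges_def by blast

lemma upper_rel_Sk1_target: "(e, e') \<in> upper_rel P 1 \<Longrightarrow> \<exists>\<alpha> \<in> Sk P 2. gam P \<alpha> = e'"
  unfolding upper_rel_def by (auto simp: numeral_2_eq_2)

lemma upper_lt_Sk1_not_nontarget: "(e, e') \<in> upper_lt P 1 \<Longrightarrow> e' \<notin> nontarget_edges"
  unfolding upper_lt_def nontarget_edges_def
  by (blast elim: tranclE dest: upper_rel_Sk1_target)

lemma inj_on_edge_src_nontarget: "inj_on edge_src nontarget_edges"
proof (rule inj_onI)
  fix a b assume ab: "a \<in> nontarget_edges" "b \<in> nontarget_edges" "edge_src a = edge_src b"
  have a1: "a \<in> Sk P (Suc 0)" "b \<in> Sk P (Suc 0)" using ab nontarget_edges_Sk1 by auto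
  show "a = b"
  proof (rule ccontr)
    assume "a \<noteq> b"
    then have "comparable (upper_lt P 1) a b"
      using upper_lt_comparable_common_del[of "edge_src a" a b 0] a1 ab del_edge by auto
    then show False using ab upper_lt_Sk1_not_nontarget unfolding comparable_def by blast
  qed
qed

lemma upper_minimal_edge_nontarget:
  assumes "m \<in> X" "X \<subseteq> Sk P 1" "\<And>e. e \<in> X \<Longrightarrow> (e, m) \<notin> upper_lt P 1"
    and "\<And>\<alpha>. \<alpha> \<in> Sk P 2 \<Longrightarrow> gam P \<alpha> = m \<Longrightarrow> del P \<alpha> \<inter> X \<noteq> {}"
  shows "m \<in> nontarget_edges"
proof -
  have "\<alpha> \<notin> Sk P 2" if g: "gam P \<alpha> = m" for \<alpha>
  proof
    assume \<alpha>: "\<alpha> \<in> Sk P 2"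
    then obtain e where e: "e \<in> del P \<alpha>" "e \<in> X" using assms(4) g by blast
    have "(e, m) \<in> upper_rel P 1"
      unfolding upper_rel_def using \<alpha> e g assms(1,2) by (auto simp: numeral_2_eq_2)
    then show False using assms(3)[OF e(2)] unfolding upper_lt_def by blast
  qed
  then show ?thesis using assms(1,2) unfolding nontarget_edges_def by blast
qed

lemma exists_nontarget_edge_from:
  assumes "e \<in> Sk P 1" shows "\<exists>a \<in> nontarget_edges. edge_src a = edge_src e"
proof -
  let ?X = "{a \<in> Sk P 1. edge_src a = edge_src e}"
  obtain m where m: "m \<in> ?X" "\<forall>a \<in> ?X. (a, m) \<notin> upper_lt P 1"
    using upper_lt_minimal[of e ?X] assms by blast
  have "del P \<alpha> \<inter> ?X \<noteq> {}" if \<alpha>: "\<alpha> \<in> Sk P 2" "gam P \<alpha> = m" for \<alpha>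
  proof -
    have "edge_src m \<in> edge_src ` del P \<alpha>" using globular_edges(2)[OF \<alpha>(1)] \<alpha>(2) by blast
    then show ?thesis using m(1) del_Sk2[OF \<alpha>(1)] by auto
  qed
  then have "m \<in> nontarget_edges"
    using m by (intro upper_minimal_edge_nontarget[of m ?X]) auto
  then show ?thesis using m(1) by blast
qed

lemma exists_nontarget_edge_into:
  assumes "e \<in> Sk P 1" shows "\<exists>a \<in> nontarget_edges. gam P a = gam P e"
proof -
  let ?X = "{a \<in> Sk P 1. gam P a = gam P e}"
  obtain m where m: "m \<in> ?X" "\<forall>a \<in> ?X. (a, m) \<notin> upper_lt P 1"
    using upper_lt_minimal[of e ?X] assms by blast
  have "del P \<alpha> \<inter> ?X \<noteq> {}" if \<alpha>: "\<alpha> \<in> Sk P 2" "gam P \<alpha> = m" for \<alpha>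
  proof -
    have "gam P m \<in> gam P ` del P \<alpha>" using globular_edges(1)[OF \<alpha>(1)] \<alpha>(2) by blast
    then show ?thesis using m(1) del_Sk2[OF \<alpha>(1)] by auto
  qed
  then have "m \<in> nontarget_edges"
    using m by (intro upper_minimal_edge_nontarget[of m ?X]) auto
  then show ?thesis using m(1) by blast
qed

lemma upper_lt_Sk0_ends:
  assumes "(x, y) \<in> upper_lt P 0"
  shows "\<exists>e \<in> Sk P 1. edge_src e = x" and "\<exists>e \<in> Sk P 1. gam P e = y"
proof -
  obtain z where "(x, z) \<in> upper_rel P 0"
    using assms unfolding upper_lt_def by (blast elim: converse_tranclE)
  then show "\<exists>e \<in> Sk P 1. edge_src e = x" using upper_rel_Sk0_iff by blast
  obtain z' where "(z', y) \<in> upper_rel P 0"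
    using assms unfolding upper_lt_def by (blast elim: tranclE)
  then show "\<exists>e \<in> Sk P 1. gam P e = y" using upper_rel_Sk0_iff by blast
qed

text \<open>Take a counterexample \<open>b\<close> with least source \<open>u\<close> and the least vertex \<open>w\<close> strictly between
  its endpoints. A nontarget edge into \<open>w\<close> is then either \<open>b\<close> itself, or starts strictly between
  \<open>u\<close> and \<open>w\<close>, or is a counterexample with source below \<open>u\<close>.\<close>

lemma nontarget_edge_no_vertex_between:
  assumes "a \<in> nontarget_edges" "(edge_src a, w) \<in> upper_lt P 0" "(w, gam P a) \<in> upper_lt P 0"
  shows False
proof -
  let ?between = "\<lambda>b w. (edge_src b, w) \<in> upper_lt P 0 \<and> (w, gam P b) \<in> upper_lt P 0"
  let ?X = "{u. \<exists>b \<in> nontarget_edges. edge_src b = u \<and> (\<exists>w. ?between b w)}"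
  obtain u where u: "u \<in> ?X" "\<forall>y \<in> ?X. (y, u) \<notin> upper_lt P 0"
    using upper_lt_minimal[of "edge_src a" ?X] assms by blast
  then obtain b w0 where b: "b \<in> nontarget_edges" "edge_src b = u" "?between b w0"
    by blast
  let ?W = "{w. ?between b w}"
  obtain w where w: "w \<in> ?W" "\<forall>y \<in> ?W. (y, w) \<notin> upper_lt P 0"
    using upper_lt_minimal[of w0 ?W] b by blast
  have uw: "(u, w) \<in> upper_lt P 0" "u \<in> Sk P 0" "w \<in> Sk P 0"
    using w(1) b(2) upper_lt_Sk by auto
  obtain e where "e \<in> Sk P 1" "gam P e = w" using upper_lt_Sk0_ends(2)[OF uw(1)] by blast
  then obtain b' where b': "b' \<in> nontarget_edges" "gam P b' = w"
    using exists_nontarget_edge_into by metis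
  have b'w: "(edge_src b', w) \<in> upper_lt P 0" "edge_src b' \<in> Sk P 0"
    using upper_lt_edge[of b'] edge_src_Sk0[of b'] b' nontarget_edges_Sk1 by auto
  consider "edge_src b' = u" | "(u, edge_src b') \<in> upper_lt P 0" | "(edge_src b', u) \<in> upper_lt P 0"
    using upper_lt_Sk0_linear[OF uw(2) b'w(2)] by blast
  then show False
  proof cases
    case 1
    then have "b' = b" using inj_on_edge_src_nontarget b b' by (auto dest: inj_onD)
    then show False using w(1) b' upper_lt_irrefl by auto
  next
    case 2
    then have "edge_src b' \<in> ?W" using b'w w(1) b(2) upper_lt_trans by blast
    then show False using w(2) b'w by blast
  next
    case 3
    then have "edge_src b' \<in> ?X" using b' uw(1) by auto
    then show False using u(2) 3 by blast
  qed
qed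

subsection \<open>Sources of a 2-face and cuts of the vertices\<close>

lemma upper_lt_Sk1_lower_chain:
  assumes "(c, d) \<in> upper_lt P 1"
  shows "\<exists>\<theta>\<^sub>0 \<theta>. \<theta>\<^sub>0 \<in> Sk P 2 \<and> \<theta> \<in> Sk P 2 \<and> c \<in> del P \<theta>\<^sub>0 \<and> gam P \<theta> = d
           \<and> (\<theta>\<^sub>0, \<theta>) \<in> (lower_rel P 2)\<^sup>*"
  using assms unfolding upper_lt_def
proof (induction rule: trancl_induct)
  case (base d)
  then show ?case unfolding upper_rel_def by (auto simp: numeral_2_eq_2)
next
  case (step d d')
  then obtain \<theta>\<^sub>0 \<theta> where \<theta>: "\<theta>\<^sub>0 \<in> Sk P 2" "\<theta> \<in> Sk P 2" "c \<in> del P \<theta>\<^sub>0" "gam P \<theta> = d"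
      "(\<theta>\<^sub>0, \<theta>) \<in> (lower_rel P 2)\<^sup>*"
    by blast
  from step(2) obtain \<alpha> where \<alpha>: "\<alpha> \<in> Sk P 2" "d \<in> del P \<alpha>" "gam P \<alpha> = d'"
    unfolding upper_rel_def by (auto simp: numeral_2_eq_2)
  have "(\<theta>, \<alpha>) \<in> lower_rel P 2" unfolding lower_rel_def using \<theta> \<alpha> by auto
  then have "(\<theta>\<^sub>0, \<alpha>) \<in> (lower_rel P 2)\<^sup>*" using \<theta>(5) by auto
  then show ?case using \<theta> \<alpha> by blast
qed

lemma lower_chain_gam_upper:
  "(\<theta>, \<theta>') \<in> (lower_rel P 2)\<^sup>* \<Longrightarrow> (gam P \<theta>, gam P \<theta>') \<in> (upper_rel P 1)\<^sup>*"
proof (induction rule: rtrancl_induct)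
  case (step \<theta>' \<theta>'')
  then have "(gam P \<theta>', gam P \<theta>'') \<in> upper_rel P 1"
    using gam_Sk2 unfolding lower_rel_def upper_rel_def by (auto simp: numeral_2_eq_2)
  then show ?case using step(3) by auto
qed simp

text \<open>If \<open>e\<^sub>1 < e\<^sub>2\<close>, a chain of 2-faces leads from one with source \<open>e\<^sub>1\<close> to one with target
  \<open>e\<^sub>2\<close>, so lower-below \<open>\<alpha>\<close>. Sharing the source \<open>e\<^sub>1\<close> with \<open>\<alpha>\<close>, the first face is also
  upper-comparable with \<open>\<alpha>\<close>, unless it is \<open>\<alpha>\<close>; then \<open>gam \<alpha>\<close> precedes its own source \<open>e\<^sub>2\<close>.\<close>

lemma del_Sk2_upper_incomparable:
  assumes "\<alpha> \<in> Sk P 2" "e\<^sub>1 \<in> del P \<alpha>" "e\<^sub>2 \<in> del P \<alpha>"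
  shows "(e\<^sub>1, e\<^sub>2) \<notin> upper_lt P 1"
proof
  assume "(e\<^sub>1, e\<^sub>2) \<in> upper_lt P 1"
  then obtain \<theta>\<^sub>0 \<theta> where \<theta>: "\<theta>\<^sub>0 \<in> Sk P 2" "\<theta> \<in> Sk P 2" "e\<^sub>1 \<in> del P \<theta>\<^sub>0" "gam P \<theta> = e\<^sub>2"
      "(\<theta>\<^sub>0, \<theta>) \<in> (lower_rel P 2)\<^sup>*"
    using upper_lt_Sk1_lower_chain by blast
  have "(\<theta>, \<alpha>) \<in> lower_rel P 2" unfolding lower_rel_def using \<theta> assms by auto
  then have lower: "(\<theta>\<^sub>0, \<alpha>) \<in> lower_lt P 2" unfolding lower_lt_def using \<theta>(5) by auto
  have e: "e\<^sub>1 \<in> Sk P 1" "e\<^sub>2 \<in> Sk P 1" using del_Sk2 assms by auto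
  show False
  proof (cases "\<theta>\<^sub>0 = \<alpha>")
    case True
    have "(gam P \<alpha>, e\<^sub>2) \<in> (upper_rel P 1)\<^sup>*" using lower_chain_gam_upper[OF \<theta>(5)] True \<theta>(4) by simp
    moreover have "(e\<^sub>2, gam P \<alpha>) \<in> upper_rel P 1"
      unfolding upper_rel_def using e gam_Sk2 assms by (auto simp: numeral_2_eq_2)
    ultimately have "(e\<^sub>2, e\<^sub>2) \<in> upper_lt P 1" unfolding upper_lt_def by auto
    then show False using upper_lt_irrefl by blast
  next
    case False
    have "comparable (upper_lt P 2) \<theta>\<^sub>0 \<alpha>"
      using upper_lt_comparable_common_del[of e\<^sub>1 \<theta>\<^sub>0 \<alpha> 1] \<theta> assms False
      by (simp add: numeral_2_eq_2)
    moreover have "comparable (lower_lt P 2) \<theta>\<^sub>0 \<alpha>" using lower unfolding comparable_def by blast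
    ultimately show False using lower_upper_incomparable[of 2 \<theta>\<^sub>0 \<alpha>] \<theta> assms by simp
  qed
qed

lemma inj_on_edge_src_del:
  assumes "\<alpha> \<in> Sk P 2" shows "inj_on edge_src (del P \<alpha>)"
proof (rule inj_onI, rule ccontr)
  fix e\<^sub>1 e\<^sub>2 assume e: "e\<^sub>1 \<in> del P \<alpha>" "e\<^sub>2 \<in> del P \<alpha>" "edge_src e\<^sub>1 = edge_src e\<^sub>2" "e\<^sub>1 \<noteq> e\<^sub>2"
  have "e\<^sub>1 \<in> Sk P (Suc 0)" "e\<^sub>2 \<in> Sk P (Suc 0)" using del_Sk2 assms e by auto
  then have "comparable (upper_lt P 1) e\<^sub>1 e\<^sub>2"
    using upper_lt_comparable_common_del[of "edge_src e\<^sub>1" e\<^sub>1 e\<^sub>2 0] e del_edge by auto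
  then show False
    using del_Sk2_upper_incomparable[OF assms] e unfolding comparable_def by blast
qed

lemma inj_on_gam_del:
  assumes "\<alpha> \<in> Sk P 2" shows "inj_on (gam P) (del P \<alpha>)"
proof (rule inj_onI, rule ccontr)
  fix e\<^sub>1 e\<^sub>2 assume e: "e\<^sub>1 \<in> del P \<alpha>" "e\<^sub>2 \<in> del P \<alpha>" "gam P e\<^sub>1 = gam P e\<^sub>2" "e\<^sub>1 \<noteq> e\<^sub>2"
  have "e\<^sub>1 \<in> Sk P (Suc 0)" "e\<^sub>2 \<in> Sk P (Suc 0)" using del_Sk2 assms e by auto
  then have "comparable (upper_lt P 1) e\<^sub>1 e\<^sub>2"
    using upper_lt_comparable_common_gam e by auto
  then show False
    using del_Sk2_upper_incomparable[OF assms] e unfolding comparable_def by blast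
qed

definition down_closed :: "'a set \<Rightarrow> bool" where
  "down_closed D \<longleftrightarrow> (\<forall>x y. (x, y) \<in> upper_lt P 0 \<longrightarrow> y \<in> D \<longrightarrow> x \<in> D)"

definition downset :: "'a \<Rightarrow> 'a set" where
  "downset v = {x. x = v \<or> (x, v) \<in> upper_lt P 0}"

definition crosses :: "'a set \<Rightarrow> 'a \<Rightarrow> bool" where
  "crosses D e \<longleftrightarrow> edge_src e \<in> D \<and> gam P e \<notin> D"

lemma down_closed_edge: "down_closed D \<Longrightarrow> e \<in> Sk P 1 \<Longrightarrow> gam P e \<in> D \<Longrightarrow> edge_src e \<in> D"
  unfolding down_closed_def using upper_lt_edge by blast

lemma card_crossing_del_eq_diff:
  assumes \<alpha>: "\<alpha> \<in> Sk P 2" and D: "down_closed D"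
  shows "card {e \<in> del P \<alpha>. crosses D e}
           = card (edge_src ` del P \<alpha> \<inter> D) - card (gam P ` del P \<alpha> \<inter> D)"
proof -
  let ?A = "{e \<in> del P \<alpha>. edge_src e \<in> D}" and ?B = "{e \<in> del P \<alpha>. gam P e \<in> D}"
  have fin: "finite (del P \<alpha>)" by (rule finite_subset[OF del_Sk2[OF \<alpha>] finite_Sk])
  have "?B \<subseteq> ?A" using down_closed_edge[OF D] del_Sk2[OF \<alpha>] by auto
  moreover have "{e \<in> del P \<alpha>. crosses D e} = ?A - ?B" by (auto simp: crosses_def)
  ultimately have "card {e \<in> del P \<alpha>. crosses D e} = card ?A - card ?B"
    using fin by (simp add: card_Diff_subset)
  moreover have "card ?A = card (edge_src ` del P \<alpha> \<inter> D)"
  proof -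
    have "inj_on edge_src ?A" using inj_on_edge_src_del[OF \<alpha>] by (rule inj_on_subset) auto
    moreover have "edge_src ` ?A = edge_src ` del P \<alpha> \<inter> D" by auto
    ultimately show ?thesis using card_image[of edge_src ?A] by simp
  qed
  moreover have "card ?B = card (gam P ` del P \<alpha> \<inter> D)"
  proof -
    have "inj_on (gam P) ?B" using inj_on_gam_del[OF \<alpha>] by (rule inj_on_subset) auto
    moreover have "gam P ` ?B = gam P ` del P \<alpha> \<inter> D" by auto
    ultimately show ?thesis using card_image[of "gam P" ?B] by simp
  qed
  ultimately show ?thesis by simp
qed

text \<open>Globularity makes the sources and targets of the edges in \<open>del \<alpha>\<close> agree except for the
  endpoints of \<open>gam \<alpha>\<close>, so exactly one source of \<open>\<alpha>\<close> crosses the cut iff \<open>gam \<alpha>\<close> does.\<close>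

lemma card_crossing_del:
  assumes \<alpha>: "\<alpha> \<in> Sk P 2" and D: "down_closed D"
  shows "card {e \<in> del P \<alpha>. crosses D e} = (if crosses D (gam P \<alpha>) then 1 else 0)"
proof -
  let ?S = "edge_src ` del P \<alpha>" and ?G = "gam P ` del P \<alpha>" and ?b = "gam P \<alpha>"
  have fin: "finite ?S" "finite ?G" using finite_subset[OF del_Sk2[OF \<alpha>] finite_Sk] by simp_all
  have "card (?S \<inter> D) = card (?S \<inter> ?G \<inter> D) + card ({edge_src ?b} \<inter> D)"
    using card_Int_split_singleton[OF fin(1)] globular_edges(2)[OF \<alpha>] by metis
  moreover have "card (?G \<inter> D) = card (?S \<inter> ?G \<inter> D) + card ({gam P ?b} \<inter> D)"
    using card_Int_split_singleton[OF fin(2)] globular_edges(1)[OF \<alpha>] by (metis Int_commute)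
  ultimately have "card {e \<in> del P \<alpha>. crosses D e} = card ({edge_src ?b} \<inter> D) - card ({gam P ?b} \<inter> D)"
    using card_crossing_del_eq_diff[OF \<alpha> D] by simp
  moreover have "gam P ?b \<in> D \<Longrightarrow> edge_src ?b \<in> D"
    using down_closed_edge[OF D gam_Sk2[OF \<alpha>]] .
  ultimately show ?thesis unfolding crosses_def by auto
qed

subsection \<open>\<open>\<iota>\<close>-maps into \<open>I\<close>\<close>

context
  fixes h :: "'a \<Rightarrow> I_face"
  assumes iota: "iota_map P I_op h"
begin

lemma iota_face: "q \<in> faces P \<Longrightarrow> h q \<in> faces I_op"
  and iota_dim: "q \<in> faces P \<Longrightarrow> dim I_op (h q) \<le> dim P q"
  and iota_gam: "q \<in> Sk P (Suc k) \<Longrightarrow> h (gam P q) = gamk I_op k (h q)"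
  using iota gamk_Suc[of q P k] unfolding iota_map_def by metis+

lemma iota_del_edge:
  "e \<in> Sk P (Suc 0) \<Longrightarrow>
     (dim I_op (h e) = 1 \<longrightarrow> bij_betw h (del P e - ker P I_op h) (del I_op (h e))) \<and>
     (dim I_op (h e) = 0 \<longrightarrow> bij_betw h (del P e - ker P I_op h) {h e})"
  using iota unfolding iota_map_def One_nat_def by blast

lemma iota_vertex: "x \<in> Sk P 0 \<Longrightarrow> h x = IMinus \<or> h x = IPlus"
  using iota_face[of x] iota_dim[of x] Sk_faces Sk_dim by (cases "h x") auto

lemma iota_edge:
  assumes e: "e \<in> Sk P 1"
  shows "h e = IA \<Longrightarrow> h (edge_src e) = IMinus \<and> h (gam P e) = IPlus"
    and "h e \<noteq> IA \<Longrightarrow> h (edge_src e) = h e \<and> h (gam P e) = h e"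
proof -
  have e': "e \<in> Sk P (Suc 0)" using e by simp
  have "edge_src e \<notin> ker P I_op h"
    unfolding ker_def using edge_src_Sk0[OF e] Sk_dim by auto
  then have "del P e - ker P I_op h = {edge_src e}" using del_edge[OF e] by auto
  then show "h e = IA \<Longrightarrow> h (edge_src e) = IMinus \<and> h (gam P e) = IPlus"
    and "h e \<noteq> IA \<Longrightarrow> h (edge_src e) = h e \<and> h (gam P e) = h e"
    using iota_del_edge[OF e'] iota_gam[OF e'] by (auto simp: bij_betw_def gamk_I)
qed

lemma iota_gam_higher: "q \<in> Sk P (Suc (Suc k)) \<Longrightarrow> h (gam P q) = h q"
  using iota_gam[of q "Suc k"] by (simp add: gamk_I)

lemma iota_upper_lt_IPlus:
  assumes "(x, y) \<in> upper_lt P 0" "h x = IPlus" shows "h y = IPlus"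
  using assms(1) unfolding upper_lt_def
proof (induction rule: trancl_induct)
  case (base y)
  then show ?case using iota_edge assms(2) upper_rel_Sk0_iff by fastforce
next
  case (step y z)
  then show ?case using iota_edge upper_rel_Sk0_iff by fastforce
qed

lemma iota_vertex_with_value: "q \<in> faces P \<Longrightarrow> h q \<noteq> IA \<Longrightarrow> \<exists>x \<in> Sk P 0. h x = h q"
proof (induction rule: face_induct)
  case (edge e)
  then show ?case using iota_edge(2)[OF edge(1)] edge_src_Sk0 by metis
qed (auto simp: iota_gam_higher)

lemma iota_IMinus_iff:
  assumes a: "a \<in> nontarget_edges" "h a = IA" and x: "x \<in> Sk P 0"
  shows "h x = IMinus \<longleftrightarrow> x \<in> downset (edge_src a)"
proof -
  have a1: "a \<in> Sk P 1" using a nontarget_edges_Sk1 by blast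
  have ends: "h (edge_src a) = IMinus" "h (gam P a) = IPlus" using iota_edge(1)[OF a1 a(2)] by auto
  show ?thesis
  proof
    assume hx: "h x = IMinus"
    show "x \<in> downset (edge_src a)"
    proof (rule ccontr)
      assume "x \<notin> downset (edge_src a)"
      then have "(edge_src a, x) \<in> upper_lt P 0"
        using upper_lt_Sk0_linear[OF x edge_src_Sk0[OF a1]] unfolding downset_def by blast
      moreover have "x \<noteq> gam P a" using hx ends by auto
      then have "(x, gam P a) \<in> upper_lt P 0 \<or> (gam P a, x) \<in> upper_lt P 0"
        using upper_lt_Sk0_linear[OF x gam_Sk1[OF a1]] by blast
      ultimately show False
        using nontarget_edge_no_vertex_between[OF a(1)] iota_upper_lt_IPlus[OF _ ends(2)] hx by auto
    qed
  next
    assume "x \<in> downset (edge_src a)"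
    then show "h x = IMinus"
      using ends iota_vertex[OF x] iota_upper_lt_IPlus[of x "edge_src a"] unfolding downset_def by auto
  qed
qed

lemma iota_nontarget_IA_unique:
  assumes "a \<in> nontarget_edges" "h a = IA" "b \<in> nontarget_edges" "h b = IA"
  shows "a = b"
proof -
  have "edge_src a \<in> downset (edge_src b)" "edge_src b \<in> downset (edge_src a)"
    using iota_IMinus_iff assms iota_edge(1) edge_src_Sk0 nontarget_edges_Sk1 by blast+
  then have "edge_src a = edge_src b"
    unfolding downset_def using upper_lt_asym by auto
  then show ?thesis using inj_on_edge_src_nontarget assms by (auto dest: inj_onD)
qed

text \<open>The last vertex sent to \<open>IMinus\<close> is the source of a nontarget edge, which must go to \<open>IA\<close>.\<close>

lemma iota_surj_nontarget_IA:
  assumes surj: "h ` faces P = faces I_op"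
  shows "\<exists>a \<in> nontarget_edges. h a = IA"
proof -
  obtain u v where "u \<in> faces P" "h u = IMinus" "v \<in> faces P" "h v = IPlus"
    using surj by (metis I_faces imageE insertI1 insertI2)
  then obtain m p where m: "m \<in> Sk P 0" "h m = IMinus" and p: "p \<in> Sk P 0" "h p = IPlus"
    using iota_vertex_with_value by (metis I_face.distinct(3,5))
  let ?M = "{x \<in> Sk P 0. h x = IMinus}"
  obtain s where s: "s \<in> ?M" "\<forall>y \<in> ?M. (s, y) \<notin> upper_lt P 0"
    using upper_lt_maximal[of m ?M] m by blast
  have "(p, s) \<notin> upper_lt P 0" using iota_upper_lt_IPlus[of p s] s(1) p(2) by auto
  moreover have "s \<noteq> p" using s(1) p(2) by auto
  ultimately have "(s, p) \<in> upper_lt P 0" using upper_lt_Sk0_linear[of s p] s(1) p(1) by blast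
  then obtain e where "e \<in> Sk P 1" "edge_src e = s" using upper_lt_Sk0_ends(1) by blast
  then obtain a where a: "a \<in> nontarget_edges" "edge_src a = s"
    using exists_nontarget_edge_from by metis
  have a1: "a \<in> Sk P 1" using a(1) nontarget_edges_Sk1 by blast
  have "h (gam P a) \<noteq> IMinus"
    using s upper_lt_edge[OF a1] a(2) gam_Sk1[OF a1] by auto
  moreover have "h (edge_src a) = IMinus" using s(1) a(2) by simp
  ultimately have "h a = IA" using iota_edge(2)[OF a1] by metis
  then show ?thesis using a(1) by blast
qed

end

lemma iota_eq_if_eq_on_vertices:
  assumes "iota_map P I_op h" "iota_map P I_op h'" "\<forall>x \<in> Sk P 0. h x = h' x" "q \<in> faces P"
  shows "h q = h' q"
  using assms(4)
proof (induction rule: face_induct)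
  case (edge e)
  have "h (edge_src e) = h' (edge_src e)" "h (gam P e) = h' (gam P e)"
    using assms(3) edge_src_Sk0[OF edge] gam_Sk1[OF edge] by auto
  then show ?case using iota_edge[OF assms(1) edge] iota_edge[OF assms(2) edge]
    by (cases "h e = IA"; cases "h' e = IA") auto
qed (use assms iota_gam_higher[OF assms(1)] iota_gam_higher[OF assms(2)] in auto)

subsection \<open>Collapsing onto \<open>I\<close> along a cut\<close>

lemma gamk_1_edge: "e \<in> Sk P 1 \<Longrightarrow> gamk P 1 e = e"
  unfolding gamk_def using Sk_dim by simp

lemma gamk_1_Sk2: "q \<in> Sk P 2 \<Longrightarrow> gamk P 1 q = gam P q"
  unfolding gamk_def using Sk_dim by (simp add: numeral_2_eq_2)

lemma gamk_1_gam:
  assumes "q \<in> Sk P (Suc (Suc n))" shows "gamk P 1 (gam P q) = gamk P 1 q"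
proof -
  have "gamk P 1 (gam P q) = (gam P ^^ n) (gam P q)"
    unfolding gamk_def using Sk_dim[OF gam_Sk[OF assms]] by simp
  also have "\<dots> = (gam P ^^ Suc n) q" by (simp add: funpow_Suc_right del: funpow.simps)
  also have "\<dots> = gamk P 1 q" unfolding gamk_def using Sk_dim[OF assms] by simp
  finally show ?thesis .
qed

definition collapse_edge :: "'a set \<Rightarrow> 'a \<Rightarrow> I_face" where
  "collapse_edge D e = (if crosses D e then IA else if edge_src e \<in> D then IMinus else IPlus)"

definition collapse :: "'a set \<Rightarrow> 'a \<Rightarrow> I_face" where
  "collapse D q =
     (if q \<notin> faces P then undefined
      else if dim P q = 0 then (if q \<in> D then IMinus else IPlus)
      else collapse_edge D (gamk P 1 q))"

lemma collapse_extensional: "collapse D \<in> extensional (faces P)"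
  unfolding collapse_def extensional_def by simp

lemma collapse_vertex: "x \<in> Sk P 0 \<Longrightarrow> collapse D x = (if x \<in> D then IMinus else IPlus)"
  unfolding collapse_def using Sk_faces Sk_dim by auto

lemma collapse_positive_dim: "q \<in> Sk P (Suc n) \<Longrightarrow> collapse D q = collapse_edge D (gamk P 1 q)"
  unfolding collapse_def using Sk_faces Sk_dim by auto

lemma collapse_edge_Sk1: "e \<in> Sk P 1 \<Longrightarrow> collapse D e = collapse_edge D e"
  using collapse_positive_dim[of e 0] gamk_1_edge by simp

lemma collapse_face: "q \<in> faces P \<Longrightarrow> collapse D q \<in> faces I_op"
  unfolding collapse_def collapse_edge_def by simp

lemma collapse_dim: "q \<in> faces P \<Longrightarrow> dim I_op (collapse D q) \<le> dim P q"
  using collapse_vertex[OF SkI] by (cases "dim P q") auto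

lemma ker_collapse_Sk1:
  "e \<in> Sk P 1 \<Longrightarrow> e \<in> ker P I_op (collapse D) \<longleftrightarrow> \<not> crosses D e"
  using collapse_edge_Sk1 Sk_faces Sk_dim unfolding ker_def collapse_edge_def by auto

context
  fixes D assumes D: "down_closed D"
begin

lemma collapse_gamk:
  assumes q: "q \<in> Sk P (Suc k)"
  shows "collapse D (gamk P k q) = gamk I_op k (collapse D q)"
proof (cases k)
  case 0
  then have e: "q \<in> Sk P 1" using q by simp
  have "crosses D q \<or> (edge_src q \<in> D \<longleftrightarrow> gam P q \<in> D)"
    using down_closed_edge[OF D e] unfolding crosses_def by blast
  then show ?thesis
    using 0 gamk_Suc[OF q] collapse_edge_Sk1[OF e] collapse_vertex[OF gam_Sk1[OF e]]
    unfolding collapse_edge_def by (auto simp: gamk_I crosses_def)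
next
  case (Suc j)
  then have q2: "q \<in> Sk P (Suc (Suc j))" using q by simp
  have "collapse D (gam P q) = collapse D q"
    using collapse_positive_dim[OF gam_Sk[OF q2]] collapse_positive_dim[OF q2] gamk_1_gam[OF q2]
    by simp
  then show ?thesis using Suc gamk_Suc[OF q] by (simp add: gamk_I)
qed

lemma collapse_del_Sk1:
  assumes e: "e \<in> Sk P 1"
  shows "(dim I_op (collapse D e) = 1 \<longrightarrow>
           bij_betw (collapse D) (del P e - ker P I_op (collapse D)) (del I_op (collapse D e))) \<and>
         (dim I_op (collapse D e) = 0 \<longrightarrow>
           bij_betw (collapse D) (del P e - ker P I_op (collapse D)) {collapse D e})"
proof -
  have "edge_src e \<notin> ker P I_op (collapse D)"
    unfolding ker_def using edge_src_Sk0[OF e] Sk_dim by auto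
  then have "del P e - ker P I_op (collapse D) = {edge_src e}" using del_edge[OF e] by auto
  then show ?thesis
    using collapse_edge_Sk1[OF e] collapse_vertex[OF edge_src_Sk0[OF e]]
    unfolding collapse_edge_def crosses_def by (auto simp: bij_betw_def)
qed

lemma collapse_del_Sk2:
  assumes \<alpha>: "\<alpha> \<in> Sk P 2"
  shows "(dim I_op (collapse D \<alpha>) = 1 \<longrightarrow>
           bij_betw (collapse D) (del P \<alpha> - ker P I_op (collapse D)) {collapse D \<alpha>}) \<and>
         (dim I_op (collapse D \<alpha>) = 0 \<longrightarrow> del P \<alpha> \<subseteq> ker P I_op (collapse D))"
proof -
  have nonker: "del P \<alpha> - ker P I_op (collapse D) = {e \<in> del P \<alpha>. crosses D e}"
    using del_Sk2[OF \<alpha>] ker_collapse_Sk1 by blast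
  have "collapse D \<alpha> = collapse_edge D (gam P \<alpha>)"
    using collapse_positive_dim[of \<alpha> 1] \<alpha> gamk_1_Sk2 by (simp add: numeral_2_eq_2)
  moreover have "collapse D e = IA" if "e \<in> del P \<alpha>" "crosses D e" for e
    using that del_Sk2[OF \<alpha>] collapse_edge_Sk1 unfolding collapse_edge_def by auto
  moreover obtain e where "crosses D (gam P \<alpha>) \<Longrightarrow> {e \<in> del P \<alpha>. crosses D e} = {e}"
    using card_crossing_del[OF \<alpha> D] by (metis card_1_singletonE)
  moreover have "\<not> crosses D (gam P \<alpha>) \<Longrightarrow> {e \<in> del P \<alpha>. crosses D e} = {}"
    using card_crossing_del[OF \<alpha> D] finite_subset[OF del_Sk2[OF \<alpha>] finite_Sk] by simp
  ultimately show ?thesis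
    using nonker unfolding collapse_edge_def by (auto simp: bij_betw_def)
qed

lemma collapse_del:
  assumes q: "q \<in> Sk P (Suc k)"
  shows "(dim I_op (collapse D q) = Suc k \<longrightarrow>
          bij_betw (collapse D) (del P q - ker P I_op (collapse D)) (del I_op (collapse D q))) \<and>
        (dim I_op (collapse D q) = k \<longrightarrow>
          bij_betw (collapse D) (del P q - ker P I_op (collapse D)) {collapse D q}) \<and>
        (dim I_op (collapse D q) < k \<longrightarrow> del P q \<subseteq> ker P I_op (collapse D))"
proof -
  consider "k = 0" | "k = 1" | j where "k = Suc (Suc j)"
    by (metis One_nat_def not0_implies_Suc)
  then show ?thesis
  proof cases
    case 1
    then show ?thesis using collapse_del_Sk1 q by simp
  next
    case 2
    then show ?thesis using collapse_del_Sk2 q by (simp add: numeral_2_eq_2)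
  next
    case 3
    have "del P q \<subseteq> ker P I_op (collapse D)"
      using del_Sk[OF q] 3 Sk_faces Sk_dim unfolding ker_def by fastforce
    then show ?thesis using 3 by simp
  qed
qed

lemma iota_map_collapse: "iota_map P I_op (collapse D)"
  unfolding iota_map_def using collapse_face collapse_dim collapse_gamk collapse_del by blast

end

lemma down_closed_downset: "down_closed (downset v)"
  unfolding down_closed_def downset_def using upper_lt_trans by blast

lemma collapse_downset:
  assumes a: "a \<in> nontarget_edges"
  defines "h \<equiv> collapse (downset (edge_src a))"
  shows "iota_map P I_op h" "h ` faces P = faces I_op" "h a = IA"
proof -
  have a1: "a \<in> Sk P 1" using a nontarget_edges_Sk1 by blast
  have "gam P a \<notin> downset (edge_src a)"
    unfolding downset_def using upper_lt_edge[OF a1] upper_lt_asym upper_lt_irrefl by fastforce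
  then have img: "h (edge_src a) = IMinus" "h (gam P a) = IPlus" "h a = IA"
    unfolding h_def using collapse_vertex edge_src_Sk0[OF a1] gam_Sk1[OF a1] collapse_edge_Sk1[OF a1]
    by (auto simp: collapse_edge_def crosses_def downset_def)
  show "iota_map P I_op h" unfolding h_def by (rule iota_map_collapse[OF down_closed_downset])
  have "h ` faces P \<subseteq> faces I_op" unfolding h_def using collapse_face by blast
  moreover have "{edge_src a, gam P a, a} \<subseteq> faces P"
    using Sk_faces edge_src_Sk0[OF a1] gam_Sk1[OF a1] a1 by blast
  then have "h ` {edge_src a, gam P a, a} \<subseteq> h ` faces P" by (rule image_mono)
  ultimately show "h ` faces P = faces I_op" using img by auto
  show "h a = IA" by (rule img(3))
qed

lemma iota_eq_collapse_downset:
  assumes iota: "iota_map P I_op h" and ext: "h \<in> extensional (faces P)"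
    and a: "a \<in> nontarget_edges" "h a = IA"
  shows "h = collapse (downset (edge_src a))"
proof (rule extensionalityI[OF ext collapse_extensional])
  have "h x = collapse (downset (edge_src a)) x" if x: "x \<in> Sk P 0" for x
    using iota_IMinus_iff[OF iota a x] iota_vertex[OF iota x] collapse_vertex[OF x] by auto
  then show "h q = collapse (downset (edge_src a)) q" if "q \<in> faces P" for q
    using iota_eq_if_eq_on_vertices[OF iota iota_map_collapse[OF down_closed_downset]] that
    by blast
qed

definition marked_edge :: "('a \<Rightarrow> I_face) \<Rightarrow> 'a" where
  "marked_edge h = (THE a. a \<in> nontarget_edges \<and> h a = IA)"

lemma marked_edge_eq:
  "iota_map P I_op h \<Longrightarrow> a \<in> nontarget_edges \<Longrightarrow> h a = IA \<Longrightarrow> marked_edge h = a"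
  unfolding marked_edge_def using iota_nontarget_IA_unique by blast

lemma marked_edge_nontarget:
  assumes "iota_map P I_op h" "h ` faces P = faces I_op"
  shows "marked_edge h \<in> nontarget_edges" "h (marked_edge h) = IA"
  using iota_surj_nontarget_IA[OF assms] marked_edge_eq[OF assms(1)] by auto

end

theorem mainTheorem6:
  fixes P :: "'a phg"
  assumes "pos_opetope P"
  shows "\<exists>f. bij_betw f
           {h. h \<in> extensional (faces P) \<and> iota_map P I_op h \<and> h ` faces P = faces I_op}
           (Sk P 1 - gam P ` Sk P 2)"
proof -
  interpret opetopic_cardinal P
    using assms by unfold_locales (simp add: pos_opetope_def)
  let ?A = "{h. h \<in> extensional (faces P) \<and> iota_map P I_op h \<and> h ` faces P = faces I_op}"
  have "bij_betw marked_edge ?A nontarget_edges"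
  proof (rule bij_betw_byWitness[where f' = "\<lambda>a. collapse (downset (edge_src a))"])
    show "\<forall>h \<in> ?A. collapse (downset (edge_src (marked_edge h))) = h"
      using marked_edge_nontarget iota_eq_collapse_downset by (metis (mono_tags, lifting) mem_Collect_eq)
    show "\<forall>a \<in> nontarget_edges. marked_edge (collapse (downset (edge_src a))) = a"
      using collapse_downset marked_edge_eq by blast
    show "marked_edge ` ?A \<subseteq> nontarget_edges" using marked_edge_nontarget by blast
    show "(\<lambda>a. collapse (downset (edge_src a))) ` nontarget_edges \<subseteq> ?A"
      using collapse_downset collapse_extensional by blast
  qed
  then show ?thesis unfolding nontarget_edges_def by blast
qed

end
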